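(* For every $n\ge 1$, there are at least $((n-1)!)^n/(n!)$ pairwise non-isomorphic port-labeled cliques (complete graphs) of size $n$.
   Context: A port-labeled graph is a finite simple undirected graph without node labels in which, at each node of degree $d$, the incident edges carry distinct port numbers $0,\dots,d-1$. Two port-labeled graphs are isomorphic if there is a bijection of nodes mapping each edge $\{u,v\}$ with port $p$ at $u$ and $q$ at $v$ to an edge with port $p$ at the image of $u$ and $q$ at the image of $v$, and conversely. *)

theory Defs
  imports Complex_Main
begin

text \<open>A port-labeled (finite simple undirected) graph: vertex set, edge set of
2-element subsets, and a port function: plg_port G u v is the port number at u of the
edge {u,v} (only meaningful when {u,v} is an edge).\<close>

record 'a plgraph =
  plg_V :: "'a set"
  plg_E :: "'a set set"
  plg_port :: "'a \<Rightarrow> 'a \<Rightarrow> nat"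

definition plg_nbrs :: "'a plgraph \<Rightarrow> 'a \<Rightarrow> 'a set" where
  "plg_nbrs G u = {v \<in> plg_V G. {u, v} \<in> plg_E G}"

definition port_labeled_graph :: "'a plgraph \<Rightarrow> bool" where
  "port_labeled_graph G \<longleftrightarrow>
     finite (plg_V G) \<and>
     (\<forall>e \<in> plg_E G. \<exists>u v. e = {u, v} \<and> u \<noteq> v \<and> u \<in> plg_V G \<and> v \<in> plg_V G) \<and>
     (\<forall>u \<in> plg_V G. bij_betw (plg_port G u) (plg_nbrs G u) {0..<card (plg_nbrs G u)})"

definition plg_iso :: "'a plgraph \<Rightarrow> 'b plgraph \<Rightarrow> ('a \<Rightarrow> 'b) \<Rightarrow> bool" where
  "plg_iso G H f \<longleftrightarrow>
     bij_betw f (plg_V G) (plg_V H) \<and>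
     (\<forall>u \<in> plg_V G. \<forall>v \<in> plg_V G.
        ({u, v} \<in> plg_E G \<longleftrightarrow> {f u, f v} \<in> plg_E H) \<and>
        ({u, v} \<in> plg_E G \<longrightarrow> plg_port H (f u) (f v) = plg_port G u v))"

definition plg_isomorphic :: "'a plgraph \<Rightarrow> 'b plgraph \<Rightarrow> bool" where
  "plg_isomorphic G H \<longleftrightarrow> (\<exists>f. plg_iso G H f)"

definition port_labeled_clique :: "nat \<Rightarrow> 'a plgraph \<Rightarrow> bool" where
  "port_labeled_clique n G \<longleftrightarrow>
     port_labeled_graph G \<and> card (plg_V G) = n \<and>
     plg_E G = {{u, v} | u v. u \<in> plg_V G \<and> v \<in> plg_V G \<and> u \<noteq> v}"

end

theory Submission
  imports Defs "HOL-Combinatorics.Permutations" "HOL-Library.FuncSet"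
begin

text \<open>Choosing, at every vertex u of the clique on {0..<n}, an arbitrary permutation of
{0..<n-1} and applying it to the neighbours of u in increasing order yields
((n-1)!)^n distinct port-labeled cliques. A clique isomorphic to one of them is obtained
from it by relabelling the vertices with one of the n! permutations of {0..<n}, so every
isomorphism class contains at most n! of these cliques, and a greedily chosen set of
pairwise non-isomorphic representatives has at least ((n-1)!)^n / n! elements.\<close>

lemma greedy_independent_cover:
  assumes "finite A"
    and "\<And>x. x \<in> A \<Longrightarrow> x \<in> C x"
    and "\<And>x y. x \<in> A \<Longrightarrow> y \<in> A \<Longrightarrow> R x y \<Longrightarrow> x \<in> C y \<and> y \<in> C x"
  shows "\<exists>S\<subseteq>A. (\<forall>x\<in>S. \<forall>y\<in>S. x \<noteq> y \<longrightarrow> \<not> R x y) \<and> A \<subseteq> (\<Union>y\<in>S. C y)"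
  using assms
proof (induction A rule: finite_induct)
  case empty
  then show ?case by auto
next
  case (insert x A)
  have "\<exists>S\<subseteq>A. (\<forall>x\<in>S. \<forall>y\<in>S. x \<noteq> y \<longrightarrow> \<not> R x y) \<and> A \<subseteq> (\<Union>y\<in>S. C y)"
    using insert.prems by (intro insert.IH) auto
  then obtain S where S: "S \<subseteq> A" "\<forall>y\<in>S. \<forall>z\<in>S. y \<noteq> z \<longrightarrow> \<not> R y z"
      "A \<subseteq> (\<Union>y\<in>S. C y)"
    by blast
  show ?case
  proof (cases "x \<in> (\<Union>y\<in>S. C y)")
    case True
    with S(3) have "insert x A \<subseteq> (\<Union>y\<in>S. C y)"
      by blast
    with S(1,2) show ?thesis
      by (intro exI[of _ S]) blast
  next
    case False
    have "\<not> R x y \<and> \<not> R y x" if "y \<in> S" for y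
    proof -
      have "y \<in> A" "x \<notin> C y" using that S(1) False by auto
      then show ?thesis using insert.prems(2)[of x y] insert.prems(2)[of y x] by auto
    qed
    moreover have "x \<in> C x"
      using insert.prems(1) by blast
    ultimately have "insert x S \<subseteq> insert x A"
      "\<forall>y\<in>insert x S. \<forall>z\<in>insert x S. y \<noteq> z \<longrightarrow> \<not> R y z"
      "insert x A \<subseteq> (\<Union>y\<in>insert x S. C y)"
      using S by auto
    then show ?thesis by blast
  qed
qed

lemma card_le_card_independent_mult:
  assumes "finite A"
    and "\<And>x. x \<in> A \<Longrightarrow> x \<in> C x"
    and "\<And>x y. x \<in> A \<Longrightarrow> y \<in> A \<Longrightarrow> R x y \<Longrightarrow> x \<in> C y \<and> y \<in> C x"
    and "\<And>y. y \<in> A \<Longrightarrow> finite (C y) \<and> card (C y) \<le> k"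
  shows "\<exists>S\<subseteq>A. (\<forall>x\<in>S. \<forall>y\<in>S. x \<noteq> y \<longrightarrow> \<not> R x y) \<and> card A \<le> card S * k"
proof -
  have "\<exists>S\<subseteq>A. (\<forall>x\<in>S. \<forall>y\<in>S. x \<noteq> y \<longrightarrow> \<not> R x y) \<and> A \<subseteq> (\<Union>y\<in>S. C y)"
    by (rule greedy_independent_cover[OF assms(1)]) (simp_all add: assms(2,3))
  then obtain S where S: "S \<subseteq> A" "\<forall>x\<in>S. \<forall>y\<in>S. x \<noteq> y \<longrightarrow> \<not> R x y"
      "A \<subseteq> (\<Union>y\<in>S. C y)"
    by blast
  have "finite S"
    using S(1) assms(1) by (rule finite_subset)
  have "card A \<le> card (\<Union>y\<in>S. C y)"
    using S(1) assms(4) \<open>finite S\<close> by (intro card_mono[OF _ S(3)]) blast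
  also have "\<dots> \<le> (\<Sum>y\<in>S. card (C y))"
    using \<open>finite S\<close> by (rule card_UN_le)
  also have "\<dots> \<le> card S * k"
    using sum_bounded_above[of S "\<lambda>y. card (C y)" k] S(1) assms(4) by force
  finally show ?thesis
    using S(1,2) by blast
qed

lemma plg_iso_inv_into:
  assumes "plg_iso G H f"
  shows "plg_iso H G (inv_into (plg_V G) f)"
proof -
  let ?g = "inv_into (plg_V G) f"
  have bij: "bij_betw f (plg_V G) (plg_V H)"
    using assms unfolding plg_iso_def by blast
  have g_in: "?g u \<in> plg_V G" and f_g: "f (?g u) = u" if "u \<in> plg_V H" for u
    using bij that by (auto simp: bij_betw_def inv_into_into f_inv_into_f)
  have "({u, v} \<in> plg_E H \<longleftrightarrow> {?g u, ?g v} \<in> plg_E G) \<and>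
        ({u, v} \<in> plg_E H \<longrightarrow> plg_port G (?g u) (?g v) = plg_port H u v)"
    if "u \<in> plg_V H" "v \<in> plg_V H" for u v
    using assms g_in[OF that(1)] g_in[OF that(2)] f_g[OF that(1)] f_g[OF that(2)]
    unfolding plg_iso_def by metis
  then show ?thesis
    using bij_betw_inv_into[OF bij] unfolding plg_iso_def by blast
qed

lemma plg_isomorphic_sym: "plg_isomorphic G H \<Longrightarrow> plg_isomorphic H G"
  unfolding plg_isomorphic_def using plg_iso_inv_into by blast

definition clique_edges :: "nat \<Rightarrow> nat set set" where
  "clique_edges n = {{u, v} | u v. u \<in> {0..<n} \<and> v \<in> {0..<n} \<and> u \<noteq> v}"

definition clique_graph :: "nat \<Rightarrow> (nat \<Rightarrow> nat \<Rightarrow> nat) \<Rightarrow> nat plgraph" where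
  "clique_graph n p = \<lparr>plg_V = {0..<n}, plg_E = clique_edges n, plg_port = p\<rparr>"

text \<open>Graphs are compared as records, so port functions must agree everywhere, not only
on edges. Normalising them to 0 off the edges makes a clique isomorphic to clique_graph n q
literally equal to a relabelling of it.\<close>

definition ports_supported :: "nat \<Rightarrow> (nat \<Rightarrow> nat \<Rightarrow> nat) \<Rightarrow> bool" where
  "ports_supported n p \<longleftrightarrow> (\<forall>u v. \<not> (u < n \<and> v < n \<and> u \<noteq> v) \<longrightarrow> p u v = 0)"

definition relabel_ports ::
    "nat \<Rightarrow> (nat \<Rightarrow> nat \<Rightarrow> nat) \<Rightarrow> (nat \<Rightarrow> nat) \<Rightarrow> nat \<Rightarrow> nat \<Rightarrow> nat" where
  "relabel_ports n p \<pi> = (\<lambda>u v. if u < n \<and> v < n \<and> u \<noteq> v then p (\<pi> u) (\<pi> v) else 0)"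

definition relabelings :: "nat \<Rightarrow> nat plgraph \<Rightarrow> nat plgraph set" where
  "relabelings n G =
     (\<lambda>\<pi>. clique_graph n (relabel_ports n (plg_port G) \<pi>)) ` {\<pi>. \<pi> permutes {0..<n}}"

lemma clique_graph_simps [simp]:
  "plg_V (clique_graph n p) = {0..<n}"
  "plg_E (clique_graph n p) = clique_edges n"
  "plg_port (clique_graph n p) = p"
  unfolding clique_graph_def by simp_all

lemma inj_clique_graph: "inj (clique_graph n)"
  by (metis injI clique_graph_simps(3))

lemma in_clique_edges: "u < n \<Longrightarrow> v < n \<Longrightarrow> u \<noteq> v \<Longrightarrow> {u, v} \<in> clique_edges n"
  unfolding clique_edges_def by auto

lemma finite_relabelings: "finite (relabelings n G)"
  unfolding relabelings_def by (simp add: finite_permutations)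

lemma card_relabelings_le: "card (relabelings n G) \<le> fact n"
proof -
  have "card (relabelings n G) \<le> card {\<pi>. \<pi> permutes {0..<n}}"
    unfolding relabelings_def by (intro card_image_le) (simp add: finite_permutations)
  also have "\<dots> = fact n"
    by (simp add: card_permutations)
  finally show ?thesis .
qed

lemma self_in_relabelings:
  assumes "ports_supported n p"
  shows "clique_graph n p \<in> relabelings n (clique_graph n p)"
proof -
  have "relabel_ports n p id = p"
    using assms unfolding relabel_ports_def ports_supported_def by (auto intro!: ext)
  then show ?thesis
    unfolding relabelings_def by (auto intro!: image_eqI[where x = id] permutes_id)
qed

lemma iso_clique_graph_in_relabelings:
  assumes "ports_supported n p" and "plg_iso (clique_graph n p) (clique_graph n q) f"
  shows "clique_graph n p \<in> relabelings n (clique_graph n q)"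
proof -
  have bij: "bij_betw f {0..<n} {0..<n}"
    and ports: "\<And>u v. u < n \<Longrightarrow> v < n \<Longrightarrow> u \<noteq> v \<Longrightarrow> q (f u) (f v) = p u v"
    using assms(2) in_clique_edges unfolding plg_iso_def by auto
  define \<pi> where "\<pi> = (\<lambda>x. if x < n then f x else x)"
  have "bij_betw \<pi> {0..<n} {0..<n}"
    using bij by (rule bij_betw_cong[THEN iffD1, rotated]) (auto simp: \<pi>_def)
  then have "\<pi> permutes {0..<n}"
    by (rule bij_imp_permutes) (auto simp: \<pi>_def)
  moreover have "p = relabel_ports n q \<pi>"
    using ports assms(1) unfolding relabel_ports_def ports_supported_def \<pi>_def
    by (auto intro!: ext)
  ultimately show ?thesis
    unfolding relabelings_def by auto
qed

lemma isomorphic_clique_graphs_in_relabelings: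
  assumes "ports_supported n p" "ports_supported n q"
    and "plg_isomorphic (clique_graph n p) (clique_graph n q)"
  shows "clique_graph n p \<in> relabelings n (clique_graph n q)"
    and "clique_graph n q \<in> relabelings n (clique_graph n p)"
  using assms plg_isomorphic_sym iso_clique_graph_in_relabelings
  unfolding plg_isomorphic_def by metis+

text \<open>The position of v in the increasing enumeration of {0..<n} - {u}.\<close>

definition rank_without :: "nat \<Rightarrow> nat \<Rightarrow> nat" where
  "rank_without u v = (if v < u then v else v - 1)"

lemma bij_betw_rank_without:
  "u < n \<Longrightarrow> bij_betw (rank_without u) ({0..<n} - {u}) {0..<n - 1}"
  by (rule bij_betw_byWitness[where f' = "\<lambda>k. if k < u then k else k + 1"])
     (auto simp: rank_without_def)

definition perm_families :: "nat \<Rightarrow> (nat \<Rightarrow> nat \<Rightarrow> nat) set" where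
  "perm_families n = PiE {0..<n} (\<lambda>_. {s. s permutes {0..<n - 1}})"

definition ports_of_perms :: "nat \<Rightarrow> (nat \<Rightarrow> nat \<Rightarrow> nat) \<Rightarrow> nat \<Rightarrow> nat \<Rightarrow> nat" where
  "ports_of_perms n \<sigma> =
     (\<lambda>u v. if u < n \<and> v < n \<and> u \<noteq> v then \<sigma> u (rank_without u v) else 0)"

lemma finite_perm_families: "finite (perm_families n)"
  unfolding perm_families_def by (simp add: finite_PiE finite_permutations)

lemma card_perm_families: "card (perm_families n) = fact (n - 1) ^ n"
  unfolding perm_families_def by (simp add: card_PiE card_permutations)

lemma ports_supported_ports_of_perms: "ports_supported n (ports_of_perms n \<sigma>)"
  unfolding ports_supported_def ports_of_perms_def by auto

lemma plg_nbrs_clique_graph: "u < n \<Longrightarrow> plg_nbrs (clique_graph n p) u = {0..<n} - {u}"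
  unfolding plg_nbrs_def using in_clique_edges by (auto simp: clique_edges_def doubleton_eq_iff)

lemma port_labeled_clique_clique_graph:
  assumes "\<And>u. u < n \<Longrightarrow> bij_betw (p u) ({0..<n} - {u}) {0..<n - 1}"
  shows "port_labeled_clique n (clique_graph n p)"
proof -
  have "bij_betw (p u) (plg_nbrs (clique_graph n p) u) {0..<card (plg_nbrs (clique_graph n p) u)}"
    if "u < n" for u
    using assms[OF that] plg_nbrs_clique_graph[OF that] that by simp
  then show ?thesis
    unfolding port_labeled_clique_def port_labeled_graph_def
    by (auto simp: clique_edges_def)
qed

lemma port_labeled_clique_ports_of_perms:
  assumes "\<sigma> \<in> perm_families n"
  shows "port_labeled_clique n (clique_graph n (ports_of_perms n \<sigma>))"
proof (rule port_labeled_clique_clique_graph)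
  fix u assume u: "u < n"
  then have "\<sigma> u permutes {0..<n - 1}"
    using assms unfolding perm_families_def by auto
  then have "bij_betw (\<sigma> u \<circ> rank_without u) ({0..<n} - {u}) {0..<n - 1}"
    using bij_betw_trans[OF bij_betw_rank_without[OF u] permutes_imp_bij] by blast
  then show "bij_betw (ports_of_perms n \<sigma> u) ({0..<n} - {u}) {0..<n - 1}"
    by (rule bij_betw_cong[THEN iffD1, rotated]) (auto simp: ports_of_perms_def u)
qed

lemma inj_on_ports_of_perms: "inj_on (ports_of_perms n) (perm_families n)"
proof (rule inj_onI)
  fix \<sigma> \<tau>
  assume \<sigma>: "\<sigma> \<in> perm_families n" and \<tau>: "\<tau> \<in> perm_families n"
    and eq: "ports_of_perms n \<sigma> = ports_of_perms n \<tau>"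
  show "\<sigma> = \<tau>"
    using \<sigma> \<tau> unfolding perm_families_def
  proof (rule PiE_ext)
    fix u assume "u \<in> {0..<n}"
    then have u: "u < n" by simp
    have perms: "\<sigma> u permutes {0..<n - 1}" "\<tau> u permutes {0..<n - 1}"
      using \<sigma> \<tau> u unfolding perm_families_def by auto
    show "\<sigma> u = \<tau> u"
    proof
      fix k
      show "\<sigma> u k = \<tau> u k"
      proof (cases "k < n - 1")
        case True
        define v where "v = (if k < u then k else k + 1)"
        have v: "v < n" "v \<noteq> u" "rank_without u v = k"
          using True u unfolding v_def rank_without_def by auto
        from fun_cong[OF fun_cong[OF eq, of u], of v] show ?thesis
          using v u unfolding ports_of_perms_def by simp
      next
        case False
        then show ?thesis
          using perms by (simp add: permutes_not_in)
      qed
    qed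
  qed
qed

definition perm_cliques :: "nat \<Rightarrow> nat plgraph set" where
  "perm_cliques n = clique_graph n ` ports_of_perms n ` perm_families n"

lemma finite_perm_cliques: "finite (perm_cliques n)"
  unfolding perm_cliques_def by (simp add: finite_perm_families)

lemma card_perm_cliques: "card (perm_cliques n) = fact (n - 1) ^ n"
proof -
  have "inj_on (clique_graph n \<circ> ports_of_perms n) (perm_families n)"
    using inj_on_ports_of_perms inj_on_subset[OF inj_clique_graph subset_UNIV]
    by (rule comp_inj_on)
  then show ?thesis
    unfolding perm_cliques_def image_comp by (simp only: card_image card_perm_families)
qed

lemma port_labeled_clique_perm_cliques: "G \<in> perm_cliques n \<Longrightarrow> port_labeled_clique n G"
  unfolding perm_cliques_def using port_labeled_clique_ports_of_perms by auto

lemma nonisomorphic_subset_perm_cliques: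
  "\<exists>S\<subseteq>perm_cliques n. (\<forall>G\<in>S. \<forall>H\<in>S. G \<noteq> H \<longrightarrow> \<not> plg_isomorphic G H) \<and>
     card (perm_cliques n) \<le> card S * fact n"
proof (rule card_le_card_independent_mult[where C = "relabelings n"])
  show "G \<in> relabelings n G" if "G \<in> perm_cliques n" for G
    using that self_in_relabelings[OF ports_supported_ports_of_perms]
    unfolding perm_cliques_def by auto
  show "G \<in> relabelings n H \<and> H \<in> relabelings n G"
    if "G \<in> perm_cliques n" "H \<in> perm_cliques n" "plg_isomorphic G H" for G H
    using that isomorphic_clique_graphs_in_relabelings[OF ports_supported_ports_of_perms
        ports_supported_ports_of_perms]
    unfolding perm_cliques_def by auto
  show "finite (relabelings n H) \<and> card (relabelings n H) \<le> fact n" for H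
    using finite_relabelings card_relabelings_le by blast
qed (rule finite_perm_cliques)

theorem lemma5p2:
  fixes n :: nat
  assumes "n \<ge> 1"
  shows "\<exists>S :: nat plgraph set.
           finite S \<and>
           (\<forall>G \<in> S. port_labeled_clique n G) \<and>
           (\<forall>G \<in> S. \<forall>H \<in> S. G \<noteq> H \<longrightarrow> \<not> plg_isomorphic G H) \<and>
           real (card S) \<ge> (fact (n - 1) :: real) ^ n / (fact n :: real)"
proof -
  obtain S where S: "S \<subseteq> perm_cliques n" "\<forall>G\<in>S. \<forall>H\<in>S. G \<noteq> H \<longrightarrow> \<not> plg_isomorphic G H"
      "card (perm_cliques n) \<le> card S * fact n"
    using nonisomorphic_subset_perm_cliques[of n] by blast
  have "real (fact (n - 1) ^ n) \<le> real (card S * fact n)"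
    using S(3) unfolding card_perm_cliques by (simp only: of_nat_le_iff)
  then have "(fact (n - 1) :: real) ^ n / fact n \<le> real (card S)"
    by (simp add: of_nat_fact divide_le_eq)
  moreover have "finite S"
    using S(1) finite_perm_cliques by (rule finite_subset)
  moreover have "\<forall>G\<in>S. port_labeled_clique n G"
    using S(1) port_labeled_clique_perm_cliques by auto
  ultimately show ?thesis
    using S(2) by (intro exI[of _ S]) simp
qed

end
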